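(* Let $\mathbf L\in\mathbb R^{n\times n}$ be positive semidefinite, let $\mathcal D$, $\mathbf W$ be a dictionary and positive weights, $r\geq 1$, $\alpha>0$, and let $l_i$, $\widehat{\mathbf L}$, $\tilde s$ be as in the context. Let $t\geq 0$ and let $\sigma=(\sigma_1,\dots,\sigma_t)\in[n]^t$ be any sequence with $l_{\sigma_j}>0$ for all $j$, and define the $t\times t$ matrix $\widetilde{\mathbf L}_\sigma$ by $[\widetilde{\mathbf L}_\sigma]_{ab}=\frac{\mathbf L_{\sigma_a\sigma_b}}{r\sqrt{l_{\sigma_a}l_{\sigma_b}}}$. Then $$\frac{e^{\tilde s}\det(\mathbf I+\alpha\widetilde{\mathbf L}_\sigma)}{e^{t/r}\det(\mathbf I+\alpha\widehat{\mathbf L})}\leq 1.$$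
   Context: A dictionary is a sequence $\mathcal D=(\mathcal D_1,\dots,\mathcal D_m)$ of elements of $[n]=\{1,\dots,n\}$, with a diagonal matrix $\mathbf W\in\mathbb R^{m\times m}$ of strictly positive weights. For index sequences $A,B$, $\mathbf L_{A,B}$ denotes the submatrix with rows indexed by $A$ and columns by $B$ (with repetitions allowed). The approximate marginals are $$l_i=\alpha\Big(\mathbf L_{ii}-\alpha\,\mathbf L_{\{i\},\mathcal D}\big(\alpha\mathbf L_{\mathcal D,\mathcal D}+\mathbf W^{-1}\big)^{-1}\mathbf L_{\mathcal D,\{i\}}\Big),\qquad i\in[n].$$ Further, $\widehat{\mathbf L}=\mathbf W^{1/2}\mathbf L_{\mathcal D,\mathcal D}\mathbf W^{1/2}\in\mathbb R^{m\times m}$ and $\tilde s=d_{\mathrm{eff}}(\alpha\widehat{\mathbf L})=\mathrm{tr}\big(\alpha\widehat{\mathbf L}(\alpha\widehat{\mathbf L}+\mathbf I)^{-1}\big)$. The determinant of a $0\times0$ matrix is $1$. *)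

theory Defs
  imports "Jordan_Normal_Form.Determinant" "Jordan_Normal_Form.Gauss_Jordan_Elimination"
begin

text \<open>Matrices are Jordan_Normal_Form matrices; indices are 0-based, so [n] = {0..<n}.\<close>

definition psd_mat :: "nat \<Rightarrow> real mat \<Rightarrow> bool" where
  "psd_mat n L \<longleftrightarrow> L \<in> carrier_mat n n \<and> transpose_mat L = L \<and>
     (\<forall>x \<in> carrier_vec n. x \<bullet> (L *\<^sub>v x) \<ge> 0)"

definition subm :: "real mat \<Rightarrow> nat list \<Rightarrow> nat list \<Rightarrow> real mat" where
  "subm L A B = mat (length A) (length B) (\<lambda>(a, b). L $$ (A ! a, B ! b))"

definition minv :: "real mat \<Rightarrow> real mat" where
  "minv A = the (mat_inverse A)"

definition mtrace :: "real mat \<Rightarrow> real" where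
  "mtrace A = (\<Sum>i < dim_row A. A $$ (i, i))"

definition diagw :: "nat \<Rightarrow> (nat \<Rightarrow> real) \<Rightarrow> real mat" where
  "diagw m w = mat m m (\<lambda>(i, j). if i = j then w i else 0)"

definition approx_marg ::
  "real mat \<Rightarrow> nat list \<Rightarrow> (nat \<Rightarrow> real) \<Rightarrow> real \<Rightarrow> nat \<Rightarrow> real" where
  "approx_marg L D w \<alpha> i = \<alpha> * (L $$ (i, i) - \<alpha> *
      (subm L [i] D * minv (\<alpha> \<cdot>\<^sub>m subm L D D + diagw (length D) (\<lambda>j. 1 / w j))
        * subm L D [i]) $$ (0, 0))"

definition Lhat :: "real mat \<Rightarrow> nat list \<Rightarrow> (nat \<Rightarrow> real) \<Rightarrow> real mat" where
  "Lhat L D w = diagw (length D) (\<lambda>j. sqrt (w j)) * subm L D D * diagw (length D) (\<lambda>j. sqrt (w j))"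

definition d_eff :: "real mat \<Rightarrow> real" where
  "d_eff A = mtrace (A * minv (A + 1\<^sub>m (dim_row A)))"

definition Ltilde ::
  "real mat \<Rightarrow> nat list \<Rightarrow> (nat \<Rightarrow> real) \<Rightarrow> real \<Rightarrow> real \<Rightarrow> nat list \<Rightarrow> real mat" where
  "Ltilde L D w \<alpha> r \<sigma> = mat (length \<sigma>) (length \<sigma>) (\<lambda>(a, b).
      L $$ (\<sigma> ! a, \<sigma> ! b) /
      (r * sqrt (approx_marg L D w \<alpha> (\<sigma> ! a) * approx_marg L D w \<alpha> (\<sigma> ! b))))"

end

theory Submission
  imports Defs
begin

text \<open>
  Factor the principal submatrix of L on the index list D @ \<sigma> as Z^T Z (Cholesky) and rescale the
  columns of Z into X and V with X^T X = \<alpha> Lhat and V^T V = \<alpha> Ltilde. For S = I + X X^T and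
  T = I + V V^T, Sylvester's identity turns det S and det T into the two determinants of the theorem,
  and Hadamard's inequality for S^(-1/2) T S^(-1/2) together with 1 + x \<le> exp x gives
  det T \<le> det S * exp (tr (S^-1 T) - k). By the push-through identity
  S^-1 = I - X (I + X^T X)^-1 X^T the exponent equals tr (V^T S^-1 V) - d_eff (\<alpha> Lhat), and each
  diagonal entry of V^T S^-1 V is an approximate marginal (a Schur complement of the Gram matrix)
  divided by r times itself, i.e. 1/r.
\<close>

lemma index_mult_mat_sum:
  "A \<in> carrier_mat nr n \<Longrightarrow> B \<in> carrier_mat n nc \<Longrightarrow> i < nr \<Longrightarrow> j < nc \<Longrightarrow>
   (A * B) $$ (i, j) = (\<Sum>c<n. A $$ (i, c) * B $$ (c, j))"
  by (simp add: scalar_prod_def atLeast0LessThan)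

lemma index_transpose_mult_mat_sum:
  "Z \<in> carrier_mat n k \<Longrightarrow> i < k \<Longrightarrow> j < k \<Longrightarrow>
   (transpose_mat Z * Z) $$ (i, j) = (\<Sum>c<n. Z $$ (c, i) * Z $$ (c, j))"
  by (simp add: scalar_prod_def atLeast0LessThan)

lemma index_mult_mat3_sum:
  assumes "A \<in> carrier_mat n1 n2" "B \<in> carrier_mat n2 n3" "C \<in> carrier_mat n3 n4" "i < n1" "j < n4"
  shows "(A * B * C) $$ (i, j) = (\<Sum>q<n3. (\<Sum>p<n2. A $$ (i, p) * B $$ (p, q)) * C $$ (q, j))"
proof -
  have "(A * B * C) $$ (i, j) = (\<Sum>q<n3. (A * B) $$ (i, q) * C $$ (q, j))"
    by (rule index_mult_mat_sum[of _ n1 n3]) (use assms in auto)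
  also have "\<dots> = (\<Sum>q<n3. (\<Sum>p<n2. A $$ (i, p) * B $$ (p, q)) * C $$ (q, j))"
    by (intro sum.cong refl, subst index_mult_mat_sum[of _ n1 n2]) (use assms in auto)
  finally show ?thesis .
qed

lemma scalar_prod_self_nonneg: "0 \<le> (v :: real vec) \<bullet> v"
  unfolding scalar_prod_def by (rule sum_nonneg) auto

subsection \<open>Positive semidefinite matrices\<close>

definition quad_form :: "nat \<Rightarrow> real mat \<Rightarrow> (nat \<Rightarrow> real) \<Rightarrow> real" where
  "quad_form n M f = (\<Sum>i<n. \<Sum>j<n. f i * M $$ (i, j) * f j)"

lemma quad_form_eq_scalar_prod:
  assumes "M \<in> carrier_mat n n"
  shows "quad_form n M f = vec n f \<bullet> (M *\<^sub>v vec n f)"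
  using assms by (simp add: quad_form_def scalar_prod_def atLeast0LessThan sum_distrib_left mult.assoc)

lemma psd_mat_quad_form_nonneg: "psd_mat n M \<Longrightarrow> 0 \<le> quad_form n M f"
  unfolding psd_mat_def by (auto simp: quad_form_eq_scalar_prod)

lemma psd_matI_quad_form:
  assumes "M \<in> carrier_mat n n" "transpose_mat M = M" "\<And>f. 0 \<le> quad_form n M f"
  shows "psd_mat n M"
proof -
  have "0 \<le> x \<bullet> (M *\<^sub>v x)" if "x \<in> carrier_vec n" for x
    using assms(3)[of "\<lambda>i. x $ i"] quad_form_eq_scalar_prod[OF assms(1)] that
    by (metis eq_vecI dim_vec index_vec carrier_vecD)
  then show ?thesis using assms unfolding psd_mat_def by auto
qed

lemma psd_mat_symmetric: "psd_mat n M \<Longrightarrow> i < n \<Longrightarrow> j < n \<Longrightarrow> M $$ (i, j) = M $$ (j, i)"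
  unfolding psd_mat_def by (metis index_transpose_mat(1) carrier_matD)

lemma psd_mat_diag_nonneg:
  assumes "psd_mat n M" "i < n"
  shows "0 \<le> M $$ (i, i)"
proof -
  have "quad_form n M (\<lambda>j. if j = i then 1 else 0) = M $$ (i, i)"
    using assms(2)
    by (simp add: quad_form_def if_distrib[of "\<lambda>x. x * _"] if_distrib[of "\<lambda>x. _ * x"] cong: if_cong)
  then show ?thesis using psd_mat_quad_form_nonneg[OF assms(1)] by metis
qed

lemma psd_mat_congruence:
  assumes T: "psd_mat n T" and P: "P \<in> carrier_mat n k"
  shows "psd_mat k (transpose_mat P * T * P)"
proof -
  have Tc: "T \<in> carrier_mat n n" and Ts: "transpose_mat T = T" using T unfolding psd_mat_def by auto
  have "transpose_mat (transpose_mat P * T * P) = transpose_mat P * transpose_mat (transpose_mat P * T)"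
    by (rule transpose_mult[of _ k n]) (use P Tc in auto)
  also have "transpose_mat (transpose_mat P * T) = transpose_mat T * P"
    by (subst transpose_mult[of _ k n]) (use P Tc in auto)
  finally have sym: "transpose_mat (transpose_mat P * T * P) = transpose_mat P * T * P"
    using Ts P Tc by (simp add: assoc_mult_mat[of _ k n _ n _ k])
  have "0 \<le> x \<bullet> ((transpose_mat P * T * P) *\<^sub>v x)" if x: "x \<in> carrier_vec k" for x
  proof -
    have Px: "P *\<^sub>v x \<in> carrier_vec n" and TPx: "T *\<^sub>v (P *\<^sub>v x) \<in> carrier_vec n"
      using P Tc x by auto
    have "(transpose_mat P * T * P) *\<^sub>v x = transpose_mat P *\<^sub>v (T *\<^sub>v (P *\<^sub>v x))"
      using P Tc x by (simp add: assoc_mult_mat_vec[of _ k n _ k] assoc_mult_mat_vec[of _ k n _ n])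
    then have "x \<bullet> ((transpose_mat P * T * P) *\<^sub>v x) = (P *\<^sub>v x) \<bullet> (T *\<^sub>v (P *\<^sub>v x))"
      using transpose_vec_mult_scalar[OF P x TPx] comm_scalar_prod[OF TPx Px]
        comm_scalar_prod[of x k "transpose_mat P *\<^sub>v (T *\<^sub>v (P *\<^sub>v x))"] P x TPx
      by simp
    then show ?thesis using T Px unfolding psd_mat_def by auto
  qed
  then show ?thesis using P Tc sym unfolding psd_mat_def by auto
qed

lemma psd_one_plus_mult_transpose:
  assumes X: "(X :: real mat) \<in> carrier_mat k m"
  shows "psd_mat k (1\<^sub>m k + X * transpose_mat X)"
proof -
  have sym: "transpose_mat (1\<^sub>m k + X * transpose_mat X) = 1\<^sub>m k + X * transpose_mat X"
    by (rule eq_matI) (use X in \<open>auto simp: comm_scalar_prod[of _ m]\<close>)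
  have "0 \<le> x \<bullet> ((1\<^sub>m k + X * transpose_mat X) *\<^sub>v x)" if x: "x \<in> carrier_vec k" for x
  proof -
    have "(1\<^sub>m k + X * transpose_mat X) *\<^sub>v x = x + X *\<^sub>v (transpose_mat X *\<^sub>v x)"
      using X x by (simp add: add_mult_distrib_mat_vec[of _ k k] assoc_mult_mat_vec[of _ k m _ k])
    then have "x \<bullet> ((1\<^sub>m k + X * transpose_mat X) *\<^sub>v x)
        = x \<bullet> x + (transpose_mat X *\<^sub>v x) \<bullet> (transpose_mat X *\<^sub>v x)"
      using X x by (simp add: scalar_prod_add_distrib[of _ k] transpose_vec_mult_scalar[of _ k m])
    then show ?thesis
      using scalar_prod_self_nonneg[of x] scalar_prod_self_nonneg[of "transpose_mat X *\<^sub>v x"] by simp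
  qed
  then show ?thesis using X sym unfolding psd_mat_def by auto
qed

subsection \<open>Cholesky factorization\<close>

lemma quadratic_nonneg_discriminant:
  fixes a b q :: real
  assumes "0 \<le> a" and nonneg: "\<And>s. 0 \<le> a * s * s + 2 * s * b + q"
  shows "0 \<le> q" and "b * b \<le> a * q"
proof -
  show "0 \<le> q" using nonneg[of 0] by simp
  show "b * b \<le> a * q"
  proof (cases "a = 0")
    case True
    have "b = 0"
    proof (rule ccontr)
      assume "b \<noteq> 0"
      then have "a * (-(q + 1) / (2 * b)) * (-(q + 1) / (2 * b)) + 2 * (-(q + 1) / (2 * b)) * b + q = -1"
        using True by (simp add: field_simps)
      then show False using nonneg[of "-(q + 1) / (2 * b)"] by linarith
    qed
    then show ?thesis using True by simp
  next
    case False
    then have a: "0 < a" using assms(1) by simp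
    have "a * (- b / a) * (- b / a) + 2 * (- b / a) * b + q = q - b * b / a"
      using a by (simp add: field_simps)
    then have "0 \<le> q - b * b / a" using nonneg[of "- b / a"] by simp
    then show ?thesis using a by (simp add: field_simps)
  qed
qed

lemma quad_form_Suc:
  assumes sym: "\<And>i j. i < Suc n \<Longrightarrow> j < Suc n \<Longrightarrow> K $$ (i, j) = K $$ (j, i)"
  shows "quad_form (Suc n) K g = K $$ (0, 0) * g 0 * g 0 + 2 * g 0 * (\<Sum>j<n. K $$ (0, Suc j) * g (Suc j))
     + (\<Sum>i<n. \<Sum>j<n. g (Suc i) * K $$ (Suc i, Suc j) * g (Suc j))"
proof -
  have "quad_form (Suc n) K g = g 0 * K $$ (0, 0) * g 0 + (\<Sum>j<n. g 0 * K $$ (0, Suc j) * g (Suc j))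
     + ((\<Sum>i<n. g (Suc i) * K $$ (Suc i, 0) * g 0)
        + (\<Sum>i<n. \<Sum>j<n. g (Suc i) * K $$ (Suc i, Suc j) * g (Suc j)))"
    unfolding quad_form_def sum.lessThan_Suc_shift by (simp add: sum.distrib del: sum.lessThan_Suc)
  also have "(\<Sum>i<n. g (Suc i) * K $$ (Suc i, 0) * g 0) = (\<Sum>j<n. g 0 * K $$ (0, Suc j) * g (Suc j))"
    using sym by (intro sum.cong) auto
  finally show ?thesis by (simp add: sum_distrib_left algebra_simps)
qed

lemma psd_mat_Suc_discriminant:
  fixes f :: "nat \<Rightarrow> real"
  assumes K: "psd_mat (Suc n) K"
  defines "b \<equiv> \<Sum>j<n. K $$ (0, Suc j) * f j"
    and "q \<equiv> \<Sum>i<n. \<Sum>j<n. f i * K $$ (Suc i, Suc j) * f j"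
  shows "0 \<le> q" and "b * b \<le> K $$ (0, 0) * q"
proof -
  have "0 \<le> K $$ (0, 0) * s * s + 2 * s * b + q" for s
    using quad_form_Suc[OF psd_mat_symmetric[OF K], where g = "\<lambda>i. if i = 0 then s else f (i - 1)"]
      psd_mat_quad_form_nonneg[OF K, of "\<lambda>i. if i = 0 then s else f (i - 1)"]
    by (simp add: b_def q_def)
  then show "0 \<le> q" and "b * b \<le> K $$ (0, 0) * q"
    using quadratic_nonneg_discriminant[OF psd_mat_diag_nonneg[OF K zero_less_Suc]] by blast+
qed

lemma psd_mat_first_row_zero:
  assumes K: "psd_mat (Suc n) K" and "K $$ (0, 0) = 0" and "j < n"
  shows "K $$ (0, Suc j) = 0"
proof -
  have "K $$ (0, Suc j) * K $$ (0, Suc j) \<le> 0"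
    using psd_mat_Suc_discriminant(2)[OF K, of "\<lambda>i. if i = j then 1 else 0"] assms(2,3)
    by (simp add: if_distrib[of "\<lambda>x. _ * x"] cong: if_cong)
  then show ?thesis by (metis mult_eq_0_iff order_antisym zero_le_square)
qed

text \<open>Complement of the pivot \<open>K $$ (0, 0)\<close>; for a zero pivot of a psd matrix the first row
  vanishes (\<open>psd_mat_first_row_zero\<close>), so no correction is needed.\<close>
definition schur_complement :: "nat \<Rightarrow> real mat \<Rightarrow> real mat" where
  "schur_complement n K = mat n n (\<lambda>(i, j). K $$ (Suc i, Suc j)
     - (if 0 < K $$ (0, 0) then K $$ (0, Suc i) * K $$ (0, Suc j) / K $$ (0, 0) else 0))"

lemma psd_mat_schur_complement:
  assumes K: "psd_mat (Suc n) K"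
  shows "psd_mat n (schur_complement n K)"
proof (rule psd_matI_quad_form)
  show "schur_complement n K \<in> carrier_mat n n" unfolding schur_complement_def by auto
  show "transpose_mat (schur_complement n K) = schur_complement n K"
    unfolding schur_complement_def
    by (rule eq_matI) (auto simp: psd_mat_symmetric[OF K] mult.commute)
  fix f
  define a where "a = K $$ (0, 0)"
  define b where "b = (\<Sum>j<n. K $$ (0, Suc j) * f j)"
  define q where "q = (\<Sum>i<n. \<Sum>j<n. f i * K $$ (Suc i, Suc j) * f j)"
  have "quad_form n (schur_complement n K) f
      = (\<Sum>i<n. \<Sum>j<n. f i * K $$ (Suc i, Suc j) * f j
          - f i * (if 0 < a then K $$ (0, Suc i) * K $$ (0, Suc j) / a else 0) * f j)"
    unfolding quad_form_def schur_complement_def a_def by (intro sum.cong refl) (auto simp: algebra_simps)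
  also have "\<dots> = q - (if 0 < a then b * b / a else 0)"
    unfolding q_def b_def
    by (auto simp: sum_subtractf sum_distrib_left sum_distrib_right sum_divide_distrib algebra_simps)
  finally show "0 \<le> quad_form n (schur_complement n K) f"
    using psd_mat_Suc_discriminant[OF K, of f] unfolding a_def[symmetric] b_def[symmetric] q_def[symmetric]
    by (cases "0 < a") (simp_all add: pos_divide_le_eq mult.commute)
qed

lemma gram_extend_by_schur_complement:
  assumes K: "psd_mat (Suc n) K" and Z'c: "Z' \<in> carrier_mat n n" and Z'ut: "upper_triangular Z'"
    and Z'K: "schur_complement n K = transpose_mat Z' * Z'"
  defines "a \<equiv> K $$ (0, 0)"
  defines "Z \<equiv> mat (Suc n) (Suc n) (\<lambda>(i, j).
    if i = 0 then (if j = 0 then sqrt a else if 0 < a then K $$ (0, j) / sqrt a else 0)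
    else if j = 0 then 0 else Z' $$ (i - 1, j - 1))"
  shows "Z \<in> carrier_mat (Suc n) (Suc n)" and "upper_triangular Z" and "K = transpose_mat Z * Z"
proof -
  show Zc: "Z \<in> carrier_mat (Suc n) (Suc n)" unfolding Z_def by auto
  show "upper_triangular Z"
    unfolding upper_triangular_def Z_def using Z'ut Z'c by (auto simp: upper_triangular_def)
  have a0: "0 \<le> a" unfolding a_def using psd_mat_diag_nonneg[OF K] by simp
  have row0: "K $$ (0, Suc j) = 0" if "a = 0" "j < n" for j
    using psd_mat_first_row_zero[OF K] that unfolding a_def by simp
  have Kc: "K \<in> carrier_mat (Suc n) (Suc n)" using K unfolding psd_mat_def by auto
  have inner: "(\<Sum>c<n. Z $$ (Suc c, Suc i) * Z $$ (Suc c, Suc j)) = schur_complement n K $$ (i, j)"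
    if "i < n" "j < n" for i j
    using index_transpose_mult_mat_sum[OF Z'c that] that unfolding Z'K by (simp add: Z_def)
  show "K = transpose_mat Z * Z"
  proof (rule eq_matI)
    fix i j assume "i < dim_row (transpose_mat Z * Z)" "j < dim_col (transpose_mat Z * Z)"
    then have i: "i < Suc n" and j: "j < Suc n" using Zc by auto
    have "(transpose_mat Z * Z) $$ (i, j)
        = Z $$ (0, i) * Z $$ (0, j) + (\<Sum>c<n. Z $$ (Suc c, i) * Z $$ (Suc c, j))"
      unfolding index_transpose_mult_mat_sum[OF Zc i j] by (simp only: sum.lessThan_Suc_shift)
    also have "\<dots> = K $$ (i, j)"
    proof (cases i; cases j)
      assume "i = 0" "j = 0"
      then show ?thesis using a0 by (simp add: Z_def a_def)
    next
      fix j' assume "i = 0" "j = Suc j'"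
      then show ?thesis using a0 j row0[of j'] by (auto simp: Z_def)
    next
      fix i' assume "i = Suc i'" "j = 0"
      then show ?thesis using a0 i row0[of i'] psd_mat_symmetric[OF K, of 0 i] by (auto simp: Z_def)
    next
      fix i' j' assume "i = Suc i'" "j = Suc j'"
      then show ?thesis using i j a0 inner[of i' j']
        by (auto simp: Z_def schur_complement_def a_def)
    qed
    finally show "K $$ (i, j) = (transpose_mat Z * Z) $$ (i, j)" by simp
  qed (use Kc Zc in auto)
qed

lemma cholesky_decomposition:
  "psd_mat n K \<Longrightarrow> \<exists>Z \<in> carrier_mat n n. upper_triangular Z \<and> K = transpose_mat Z * Z"
proof (induction n arbitrary: K)
  case 0
  then have "K \<in> carrier_mat 0 0" unfolding psd_mat_def by auto
  then show ?case by (intro bexI[of _ "0\<^sub>m 0 0"]) (auto simp: upper_triangular_def)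
next
  case (Suc n)
  obtain Z' where "Z' \<in> carrier_mat n n" "upper_triangular Z'"
    "schur_complement n K = transpose_mat Z' * Z'"
    using Suc.IH[OF psd_mat_schur_complement[OF Suc.prems]] by auto
  from gram_extend_by_schur_complement[OF Suc.prems this] show ?case by blast
qed

subsection \<open>Trace and determinant inequalities\<close>

lemma mtrace_mult_comm:
  assumes "A \<in> carrier_mat n k" "B \<in> carrier_mat k n"
  shows "mtrace (A * B) = mtrace (B * A)"
proof -
  have dims: "dim_row (A * B) = n" "dim_row (B * A) = k" using assms by auto
  have "mtrace (A * B) = (\<Sum>i<n. \<Sum>c<k. A $$ (i, c) * B $$ (c, i))"
    unfolding mtrace_def dims using assms by (intro sum.cong refl, subst index_mult_mat_sum[of _ n k]) auto
  also have "\<dots> = (\<Sum>c<k. \<Sum>i<n. B $$ (c, i) * A $$ (i, c))"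
    by (subst sum.swap) (simp add: mult.commute)
  also have "\<dots> = mtrace (B * A)"
    unfolding mtrace_def dims using assms by (intro sum.cong refl, subst index_mult_mat_sum[of _ k n]) auto
  finally show ?thesis .
qed

lemma mtrace_add: "A \<in> carrier_mat n n \<Longrightarrow> B \<in> carrier_mat n n \<Longrightarrow> mtrace (A + B) = mtrace A + mtrace B"
  unfolding mtrace_def by (simp add: sum.distrib)

lemma mtrace_minus: "A \<in> carrier_mat n n \<Longrightarrow> B \<in> carrier_mat n n \<Longrightarrow> mtrace (A - B) = mtrace A - mtrace B"
  unfolding mtrace_def by (simp add: sum_subtractf)

lemma mtrace_one: "mtrace (1\<^sub>m n) = real n"
  unfolding mtrace_def by simp

lemma hadamard_inequality:
  assumes "psd_mat n T"
  shows "det T \<le> (\<Prod>i<n. T $$ (i, i))"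
proof -
  obtain Z where Zc: "Z \<in> carrier_mat n n" and ut: "upper_triangular Z" and TZ: "T = transpose_mat Z * Z"
    using cholesky_decomposition[OF assms] by auto
  have diag: "Z $$ (i, i) * Z $$ (i, i) \<le> T $$ (i, i)" if "i < n" for i
    unfolding TZ index_transpose_mult_mat_sum[OF Zc that that]
    by (rule member_le_sum[of i "{..<n}" "\<lambda>c. Z $$ (c, i) * Z $$ (c, i)", simplified])
      (use that in auto)
  have "det T = det Z * det Z"
    unfolding TZ using Zc by (simp add: det_mult[of _ n] det_transpose)
  also have "\<dots> = (\<Prod>i<n. Z $$ (i, i) * Z $$ (i, i))"
    using det_upper_triangular[OF ut Zc] prod_list_diag_prod[of Z] Zc
    by (simp add: atLeast0LessThan prod.distrib)
  also have "\<dots> \<le> (\<Prod>i<n. T $$ (i, i))"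
    by (rule prod_mono) (use diag in auto)
  finally show ?thesis .
qed

lemma det_le_exp_mtrace:
  assumes T: "psd_mat n T"
  shows "det T \<le> exp (mtrace T - real n)"
proof -
  have "det T \<le> (\<Prod>i<n. T $$ (i, i))" by (rule hadamard_inequality[OF T])
  also have "\<dots> \<le> (\<Prod>i<n. exp (T $$ (i, i) - 1))"
  proof (rule prod_mono)
    fix i assume "i \<in> {..<n}"
    then show "0 \<le> T $$ (i, i) \<and> T $$ (i, i) \<le> exp (T $$ (i, i) - 1)"
      using psd_mat_diag_nonneg[OF T, of i] exp_ge_add_one_self[of "T $$ (i, i) - 1"] by auto
  qed
  also have "\<dots> = exp (mtrace T - real n)"
    using T unfolding psd_mat_def mtrace_def by (auto simp: exp_sum[symmetric] sum_subtractf)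
  finally show ?thesis .
qed

lemma psd_mat_det_nonneg: "psd_mat n S \<Longrightarrow> 0 \<le> det S"
  using cholesky_decomposition[of n S] by (auto simp: det_mult[of _ n] det_transpose)

lemma transpose_inverse_of_symmetric:
  fixes S Si :: "'a :: comm_ring_1 mat"
  assumes S: "S \<in> carrier_mat n n" "transpose_mat S = S"
    and Si: "Si \<in> carrier_mat n n" and SSi: "S * Si = 1\<^sub>m n"
  shows "transpose_mat Si = Si"
proof -
  have left: "transpose_mat Si * S = 1\<^sub>m n"
    using transpose_mult[OF S(1) Si] SSi S(2) by simp
  have "transpose_mat Si = transpose_mat Si * (S * Si)"
    using Si SSi by simp
  also have "\<dots> = (transpose_mat Si * S) * Si" using Si S by (simp add: assoc_mult_mat[of _ n n _ n _ n])
  also have "\<dots> = Si" using Si left by simp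
  finally show ?thesis .
qed

text \<open>With S = Y^T Y, the congruence T' = Y^-T T Y^-1 reduces the claim to the case S = I.\<close>
lemma det_le_det_mult_exp_mtrace:
  assumes S: "psd_mat n S" and T: "psd_mat n T"
    and Si: "Si \<in> carrier_mat n n" and SSi: "S * Si = 1\<^sub>m n"
  shows "det T \<le> det S * exp (mtrace (Si * T) - real n)"
proof -
  have Sc: "S \<in> carrier_mat n n" and Ss: "transpose_mat S = S" and Tc: "T \<in> carrier_mat n n"
    using S T unfolding psd_mat_def by auto
  obtain Y where Yc: "Y \<in> carrier_mat n n" and SY: "S = transpose_mat Y * Y"
    using cholesky_decomposition[OF S] by auto
  have SiS: "Si * S = 1\<^sub>m n" by (rule mat_mult_left_right_inverse[OF Sc Si SSi])
  define Yi where "Yi = Si * transpose_mat Y"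
  have Yic: "Yi \<in> carrier_mat n n" unfolding Yi_def using Si Yc by auto
  have YiY: "Yi * Y = 1\<^sub>m n"
    unfolding Yi_def using Si Yc SiS SY by (simp add: assoc_mult_mat[of _ n n _ n _ n])
  have "Yi * transpose_mat Yi = Si * (transpose_mat Y * Y) * transpose_mat Si"
    unfolding Yi_def using Si Yc by (simp add: transpose_mult[of _ n n] assoc_mult_mat[of _ n n _ n _ n])
  also have "\<dots> = Si"
    using SY SiS Si transpose_inverse_of_symmetric[OF Sc Ss Si SSi] by simp
  finally have YiYit: "Yi * transpose_mat Yi = Si" .
  define T' where "T' = transpose_mat Yi * T * Yi"
  have "det T = det T' * det S"
  proof -
    have "det Yi * det Y = 1" using det_mult[OF Yic Yc] YiY by simp
    moreover have "det T' = det Yi * det T * det Yi"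
      unfolding T'_def using Yic Tc by (simp add: det_mult[of _ n] det_transpose)
    moreover have "det S = det Y * det Y" unfolding SY using Yc by (simp add: det_mult[of _ n] det_transpose)
    ultimately show ?thesis by (simp add: algebra_simps)
  qed
  moreover have "mtrace T' = mtrace (Si * T)"
  proof -
    have "mtrace T' = mtrace (Yi * (transpose_mat Yi * T))"
      unfolding T'_def by (rule mtrace_mult_comm[of _ n n]) (use Yic Tc in auto)
    also have "Yi * (transpose_mat Yi * T) = Si * T"
      using Yic Tc YiYit by (simp add: assoc_mult_mat[of _ n n _ n _ n, symmetric])
    finally show ?thesis .
  qed
  moreover have "det T' \<le> exp (mtrace T' - real n)"
    unfolding T'_def by (rule det_le_exp_mtrace[OF psd_mat_congruence[OF T Yic]])
  ultimately show ?thesis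
    using psd_mat_det_nonneg[OF S] by (simp add: mult.commute mult_left_mono)
qed

lemma det_one_plus_mult_transpose:
  assumes X: "(X :: real mat) \<in> carrier_mat k m"
  shows "det (1\<^sub>m k + X * transpose_mat X) = det (1\<^sub>m m + transpose_mat X * X)"
proof -
  define M where "M = four_block_mat (1\<^sub>m k) (- X) (transpose_mat X) (1\<^sub>m m)"
  define P1 where "P1 = four_block_mat (1\<^sub>m k) (0\<^sub>m k m) (transpose_mat X) (1\<^sub>m m)"
  define P2 where "P2 = four_block_mat (1\<^sub>m k) (- X) (0\<^sub>m m k) (1\<^sub>m m + transpose_mat X * X)"
  define P3 where "P3 = four_block_mat (1\<^sub>m k + X * transpose_mat X) (- X) (0\<^sub>m m k) (1\<^sub>m m)"
  have c: "P1 \<in> carrier_mat (k + m) (k + m)" "P2 \<in> carrier_mat (k + m) (k + m)"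
    "P3 \<in> carrier_mat (k + m) (k + m)"
    unfolding P1_def P2_def P3_def using X by auto
  have "P1 * P2 = four_block_mat (1\<^sub>m k * 1\<^sub>m k + 0\<^sub>m k m * 0\<^sub>m m k)
      (1\<^sub>m k * - X + 0\<^sub>m k m * (1\<^sub>m m + transpose_mat X * X))
      (transpose_mat X * 1\<^sub>m k + 1\<^sub>m m * 0\<^sub>m m k)
      (transpose_mat X * - X + 1\<^sub>m m * (1\<^sub>m m + transpose_mat X * X))"
    unfolding P1_def P2_def by (rule mult_four_block_mat) (use X in auto)
  also have "\<dots> = M"
    unfolding M_def using X by (intro arg_cong4[where f = four_block_mat] eq_matI) auto
  finally have M1: "M = P1 * P2" ..
  have "P3 * P1 = four_block_mat ((1\<^sub>m k + X * transpose_mat X) * 1\<^sub>m k + - X * transpose_mat X)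
      ((1\<^sub>m k + X * transpose_mat X) * 0\<^sub>m k m + - X * 1\<^sub>m m)
      (0\<^sub>m m k * 1\<^sub>m k + 1\<^sub>m m * transpose_mat X)
      (0\<^sub>m m k * 0\<^sub>m k m + 1\<^sub>m m * 1\<^sub>m m)"
    unfolding P1_def P3_def by (rule mult_four_block_mat) (use X in auto)
  also have "\<dots> = M"
    unfolding M_def using X by (intro arg_cong4[where f = four_block_mat] eq_matI) auto
  finally have M2: "M = P3 * P1" ..
  have "det P1 = 1" unfolding P1_def
    by (subst det_four_block_mat_upper_right_zero[of _ k _ m]) (use X in auto)
  moreover have "det P2 = det (1\<^sub>m m + transpose_mat X * X)" unfolding P2_def
    by (subst det_four_block_mat_lower_left_zero[of _ k _ m]) (use X in auto)
  moreover have "det P3 = det (1\<^sub>m k + X * transpose_mat X)" unfolding P3_def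
    by (subst det_four_block_mat_lower_left_zero[of _ k _ m]) (use X in auto)
  ultimately show ?thesis using M1 M2 det_mult[OF c(1) c(2)] det_mult[OF c(3) c(1)] by simp
qed

lemma minv_inverse:
  assumes A: "A \<in> carrier_mat n n" and d: "det A \<noteq> 0"
  shows "minv A \<in> carrier_mat n n" "A * minv A = 1\<^sub>m n" "minv A * A = 1\<^sub>m n"
proof -
  obtain B where B: "mat_inverse A = Some B"
    using mat_inverse(1)[OF A] det_non_zero_imp_unit[OF A d] by fastforce
  show "minv A \<in> carrier_mat n n" "A * minv A = 1\<^sub>m n" "minv A * A = 1\<^sub>m n"
    using mat_inverse(2)[OF A B] unfolding minv_def B by auto
qed

lemma minv_eqI:
  assumes A: "A \<in> carrier_mat n n" and B: "B \<in> carrier_mat n n" and AB: "A * B = 1\<^sub>m n"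
  shows "minv A = B"
proof -
  have "det A * det B = 1" using det_mult[OF A B] AB by simp
  then have "det A \<noteq> 0" by auto
  note inv = minv_inverse[OF A this]
  have "B = (minv A * A) * B" using inv B by simp
  also have "\<dots> = minv A * (A * B)" by (rule assoc_mult_mat) (use inv A B in auto)
  also have "\<dots> = minv A" using AB inv by simp
  finally show ?thesis by simp
qed

lemma det_one_plus_transpose_mult_pos:
  assumes X: "(X :: real mat) \<in> carrier_mat k m"
  shows "0 < det (1\<^sub>m m + transpose_mat X * X)"
proof -
  let ?M = "1\<^sub>m m + transpose_mat X * X"
  have Mc: "?M \<in> carrier_mat m m" using X by auto
  have "det ?M \<noteq> 0"
  proof
    assume "det ?M = 0"
    then obtain v where v: "v \<in> carrier_vec m" "v \<noteq> 0\<^sub>v m" "?M *\<^sub>v v = 0\<^sub>v m"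
      using det_0_iff_vec_prod_zero_field[OF Mc] by auto
    have "?M *\<^sub>v v = v + transpose_mat X *\<^sub>v (X *\<^sub>v v)"
      using X v by (simp add: add_mult_distrib_mat_vec[of _ m m] assoc_mult_mat_vec[of _ m k _ m])
    then have "v \<bullet> (?M *\<^sub>v v) = v \<bullet> v + (X *\<^sub>v v) \<bullet> (X *\<^sub>v v)"
      using X v transpose_vec_mult_scalar[OF X v(1) mult_mat_vec_carrier[OF X v(1)]]
        comm_scalar_prod[of v m "transpose_mat X *\<^sub>v (X *\<^sub>v v)"]
      by (simp add: scalar_prod_add_distrib[of _ m])
    then have "v \<bullet> v = 0"
      using v scalar_prod_self_nonneg[of v] scalar_prod_self_nonneg[of "X *\<^sub>v v"] by simp
    then have "\<forall>i\<in>{0..<m}. v $ i * v $ i = 0"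
      using v(1) unfolding scalar_prod_def by (subst (asm) sum_nonneg_eq_0_iff) auto
    then have "v = 0\<^sub>v m" using v(1) by (intro eq_vecI) auto
    then show False using v(2) by simp
  qed
  moreover have "0 \<le> det ?M"
    using psd_mat_det_nonneg[OF psd_one_plus_mult_transpose[of "transpose_mat X" m k]] X by simp
  ultimately show ?thesis by simp
qed

lemma push_through_inverse:
  assumes X: "X \<in> carrier_mat k m" and G: "G \<in> carrier_mat m m"
    and inv: "(1\<^sub>m m + transpose_mat X * X) * G = 1\<^sub>m m"
  shows "(1\<^sub>m k + X * transpose_mat X) * (1\<^sub>m k - X * G * transpose_mat X) = (1\<^sub>m k :: real mat)"
proof -
  define S where "S = 1\<^sub>m k + X * transpose_mat X"
  have Sc: "S \<in> carrier_mat k k" unfolding S_def using X by auto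
  have "S * X = X + X * (transpose_mat X * X)"
    unfolding S_def using X by (simp add: add_mult_distrib_mat[of _ k k] assoc_mult_mat[of _ k m _ k _ m])
  also have "\<dots> = X * (1\<^sub>m m + transpose_mat X * X)"
    using X by (subst mult_add_distrib_mat[of _ k m]) auto
  finally have SX: "S * X = X * (1\<^sub>m m + transpose_mat X * X)" .
  have "S * (X * G * transpose_mat X) = S * X * G * transpose_mat X"
    using X G Sc by (simp add: assoc_mult_mat[of _ k k _ m _ k] assoc_mult_mat[of _ k k _ m _ m])
  also have "\<dots> = X * ((1\<^sub>m m + transpose_mat X * X) * G) * transpose_mat X"
    unfolding SX using X G by (simp add: assoc_mult_mat[of _ k m _ m _ m])
  also have "\<dots> = X * transpose_mat X" unfolding inv using X by simp
  finally have "S * (X * G * transpose_mat X) = X * transpose_mat X" .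
  moreover have "S * (1\<^sub>m k - X * G * transpose_mat X) = S - S * (X * G * transpose_mat X)"
    using Sc X G by (subst mult_minus_distrib_mat[of _ k k]) auto
  moreover have "S - X * transpose_mat X = 1\<^sub>m k"
    unfolding S_def by (rule eq_matI) (use X in auto)
  ultimately show ?thesis unfolding S_def by simp
qed

lemma det_one_plus_gram_le:
  fixes X V :: "real mat"
  assumes X: "X \<in> carrier_mat k m" and V: "V \<in> carrier_mat k t"
  defines "G \<equiv> minv (1\<^sub>m m + transpose_mat X * X)"
  shows "det (1\<^sub>m t + transpose_mat V * V) \<le> det (1\<^sub>m m + transpose_mat X * X) *
    exp (mtrace (transpose_mat V * (1\<^sub>m k - X * G * transpose_mat X) * V) - mtrace (transpose_mat X * X * G))"
proof -
  have "1\<^sub>m m + transpose_mat X * X \<in> carrier_mat m m" using X by auto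
  note G_inv = minv_inverse[OF this det_one_plus_transpose_mult_pos[OF X, THEN less_imp_neq, symmetric]]
  have Gc: "G \<in> carrier_mat m m" using G_inv(1) unfolding G_def .
  define Si where "Si = 1\<^sub>m k - X * G * transpose_mat X"
  have Sic: "Si \<in> carrier_mat k k" unfolding Si_def using X Gc by auto
  have trace: "mtrace (Si * (1\<^sub>m k + V * transpose_mat V)) - real k
      = mtrace (transpose_mat V * Si * V) - mtrace (transpose_mat X * X * G)"
  proof -
    have "Si * (1\<^sub>m k + V * transpose_mat V) = Si + Si * V * transpose_mat V"
      using Sic V by (subst mult_add_distrib_mat[of _ k k]) (auto simp: assoc_mult_mat[of _ k k _ t _ k])
    moreover have "mtrace (Si * V * transpose_mat V) = mtrace (transpose_mat V * Si * V)"
      using mtrace_mult_comm[of "Si * V" k t "transpose_mat V"] Sic V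
      by (simp add: assoc_mult_mat[of _ t k _ k _ t])
    moreover have "mtrace (X * G * transpose_mat X) = mtrace (transpose_mat X * X * G)"
      using mtrace_mult_comm[of "X * G" k m "transpose_mat X"] X Gc
      by (simp add: assoc_mult_mat[of _ k m _ m _ k] assoc_mult_mat[of _ m k _ m _ k])
    moreover have "mtrace Si = real k - mtrace (X * G * transpose_mat X)"
      unfolding Si_def using X Gc by (simp add: mtrace_minus[of _ k] mtrace_one)
    ultimately show ?thesis using Sic V by (simp add: mtrace_add[of _ k])
  qed
  have "det (1\<^sub>m t + transpose_mat V * V) = det (1\<^sub>m k + V * transpose_mat V)"
    by (rule det_one_plus_mult_transpose[OF V, symmetric])
  also have "\<dots> \<le> det (1\<^sub>m k + X * transpose_mat X)
      * exp (mtrace (Si * (1\<^sub>m k + V * transpose_mat V)) - real k)"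
    using det_le_det_mult_exp_mtrace[OF psd_one_plus_mult_transpose[OF X] psd_one_plus_mult_transpose[OF V] Sic]
      push_through_inverse[OF X Gc] G_inv(2) unfolding Si_def G_def by blast
  also have "\<dots> = det (1\<^sub>m m + transpose_mat X * X) *
      exp (mtrace (transpose_mat V * Si * V) - mtrace (transpose_mat X * X * G))"
    unfolding trace det_one_plus_mult_transpose[OF X] ..
  finally show ?thesis unfolding Si_def .
qed

subsection \<open>Dictionary matrices\<close>

lemma diagw_carrier [simp]: "diagw m f \<in> carrier_mat m m"
  unfolding diagw_def by auto

lemma dim_diagw [simp]: "dim_row (diagw m f) = m" "dim_col (diagw m f) = m"
  unfolding diagw_def by auto

lemma index_diagw [simp]: "i < m \<Longrightarrow> j < m \<Longrightarrow> diagw m f $$ (i, j) = (if i = j then f i else 0)"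
  unfolding diagw_def by auto

lemma index_diagw_mult:
  assumes "A \<in> carrier_mat m n" "i < m" "j < n"
  shows "(diagw m f * A) $$ (i, j) = f i * A $$ (i, j)"
proof -
  have "(diagw m f * A) $$ (i, j) = (\<Sum>c<m. (if i = c then f i else 0) * A $$ (c, j))"
    using assms by (subst index_mult_mat_sum[of _ m m]) (auto intro!: sum.cong)
  also have "\<dots> = (\<Sum>c<m. if c = i then f i * A $$ (c, j) else 0)" by (intro sum.cong) auto
  finally show ?thesis using assms by simp
qed

lemma index_mult_diagw:
  assumes "A \<in> carrier_mat n m" "i < n" "j < m"
  shows "(A * diagw m f) $$ (i, j) = A $$ (i, j) * f j"
proof -
  have "(A * diagw m f) $$ (i, j) = (\<Sum>c<m. A $$ (i, c) * (if c = j then f j else 0))"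
    using assms by (subst index_mult_mat_sum[of _ n m]) (auto intro!: sum.cong)
  also have "\<dots> = (\<Sum>c<m. if c = j then A $$ (i, c) * f j else 0)" by (intro sum.cong) auto
  finally show ?thesis using assms by simp
qed

lemma subm_carrier [simp]: "subm L A B \<in> carrier_mat (length A) (length B)"
  unfolding subm_def by auto

lemma dim_subm [simp]: "dim_row (subm L A B) = length A" "dim_col (subm L A B) = length B"
  unfolding subm_def by auto

lemma index_subm [simp]: "i < length A \<Longrightarrow> j < length B \<Longrightarrow> subm L A B $$ (i, j) = L $$ (A ! i, B ! j)"
  unfolding subm_def by auto

lemma Lhat_carrier: "Lhat L D w \<in> carrier_mat (length D) (length D)"
  unfolding Lhat_def by (intro mult_carrier_mat[of _ _ "length D"] diagw_carrier subm_carrier)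

lemma index_Lhat:
  assumes "i < length D" "j < length D"
  shows "Lhat L D w $$ (i, j) = sqrt (w i) * L $$ (D ! i, D ! j) * sqrt (w j)"
proof -
  have c: "diagw (length D) (\<lambda>j. sqrt (w j)) * subm L D D \<in> carrier_mat (length D) (length D)"
    by (intro mult_carrier_mat[of _ _ "length D"] diagw_carrier subm_carrier)
  show ?thesis
    unfolding Lhat_def index_mult_diagw[OF c assms] index_diagw_mult[OF subm_carrier assms] using assms
    by simp
qed

lemma psd_mat_subm:
  assumes L: "psd_mat n L" and I: "set I \<subseteq> {..<n}"
  shows "psd_mat (length I) (subm L I I)"
proof -
  define P where "P = mat n (length I) (\<lambda>(p, a). if I ! a = p then 1 else 0 :: real)"
  have Pc: "P \<in> carrier_mat n (length I)" unfolding P_def by auto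
  have Lc: "L \<in> carrier_mat n n" using L unfolding psd_mat_def by auto
  have I_lt: "I ! a < n" if "a < length I" for a using I nth_mem[OF that] by auto
  have "transpose_mat P * L * P = subm L I I"
  proof (rule eq_matI)
    fix a b assume "a < dim_row (subm L I I)" "b < dim_col (subm L I I)"
    then have ab: "a < length I" "b < length I" by auto
    have "(transpose_mat P * L * P) $$ (a, b) = L $$ (I ! a, I ! b)"
      using Pc Lc ab I_lt[OF ab(1)] I_lt[OF ab(2)]
      by (subst index_mult_mat3_sum[of _ "length I" n _ n _ "length I"])
        (auto simp: P_def if_distrib[of "\<lambda>x. x * _"] if_distrib[of "\<lambda>x. _ * x"] cong: if_cong)
    then show "(transpose_mat P * L * P) $$ (a, b) = subm L I I $$ (a, b)" using ab by simp
  qed (use Pc Lc in auto)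
  then show ?thesis using psd_mat_congruence[OF L Pc] by simp
qed

lemma sandwich_one_minus:
  fixes V X G :: "real mat"
  assumes V: "V \<in> carrier_mat k t" and X: "X \<in> carrier_mat k m" and G: "G \<in> carrier_mat m m"
  shows "transpose_mat V * (1\<^sub>m k - X * G * transpose_mat X) * V
     = transpose_mat V * V - (transpose_mat V * X) * G * (transpose_mat X * V)"
proof -
  have "transpose_mat V * (1\<^sub>m k - X * G * transpose_mat X) * V
      = (transpose_mat V - transpose_mat V * (X * G * transpose_mat X)) * V"
    using V X G by (subst mult_minus_distrib_mat[of _ t k]) auto
  also have "\<dots> = transpose_mat V * V - transpose_mat V * (X * G * transpose_mat X) * V"
    using V X G by (subst minus_mult_distrib_mat[of _ t k]) auto
  also have "transpose_mat V * (X * G * transpose_mat X) * V = (transpose_mat V * X) * G * (transpose_mat X * V)"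
    using V X G by (simp add: assoc_mult_mat[of _ t k _ k _ t] assoc_mult_mat[of _ k m _ k _ t]
        assoc_mult_mat[of _ t k _ m _ t] assoc_mult_mat[of _ t k _ m _ m] assoc_mult_mat[of _ k m _ m _ k]
        assoc_mult_mat[of _ k m _ m _ t])
  finally show ?thesis .
qed

locale factored_dictionary =
  fixes L :: "real mat" and D \<sigma> :: "nat list" and w :: "nat \<Rightarrow> real" and \<alpha> r :: real
    and Z :: "real mat"
  assumes Z_carrier: "Z \<in> carrier_mat (length D + length \<sigma>) (length D + length \<sigma>)"
    and gram: "subm L (D @ \<sigma>) (D @ \<sigma>) = transpose_mat Z * Z"
    and w_pos: "\<forall>j < length D. 0 < w j"
    and r_pos: "0 < r" and \<alpha>_pos: "0 < \<alpha>"
    and marg_pos: "\<forall>a < length \<sigma>. 0 < approx_marg L D w \<alpha> (\<sigma> ! a)"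
begin

abbreviation "m \<equiv> length D"
abbreviation "t \<equiv> length \<sigma>"

definition marg :: "nat \<Rightarrow> real" where
  "marg a = approx_marg L D w \<alpha> (\<sigma> ! a)"

definition X :: "real mat" where
  "X = mat (m + t) m (\<lambda>(c, j). sqrt \<alpha> * sqrt (w j) * Z $$ (c, j))"

definition V :: "real mat" where
  "V = mat (m + t) t (\<lambda>(c, a). sqrt (\<alpha> / r) / sqrt (marg a) * Z $$ (c, m + a))"

definition G :: "real mat" where
  "G = minv (1\<^sub>m m + transpose_mat X * X)"

lemma X_carrier: "X \<in> carrier_mat (m + t) m"
  unfolding X_def by auto

lemma V_carrier: "V \<in> carrier_mat (m + t) t"
  unfolding V_def by auto

lemma sqrt_w_square: "j < m \<Longrightarrow> sqrt (w j) * sqrt (w j) = w j"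
  using w_pos[rule_format, of j] by simp

lemma sqrt_marg_square: "a < t \<Longrightarrow> sqrt (marg a) * sqrt (marg a) = marg a"
  using marg_pos[rule_format, of a] unfolding marg_def by simp

lemma gram_entry:
  assumes "a < m + t" "b < m + t"
  shows "(\<Sum>c<m + t. Z $$ (c, a) * Z $$ (c, b)) = L $$ ((D @ \<sigma>) ! a, (D @ \<sigma>) ! b)"
  using index_transpose_mult_mat_sum[OF Z_carrier assms] arg_cong[OF gram, of "\<lambda>M. M $$ (a, b)"] assms
  by simp

lemma transpose_X_mult_X: "transpose_mat X * X = \<alpha> \<cdot>\<^sub>m Lhat L D w"
proof (rule eq_matI)
  fix i j assume "i < dim_row (\<alpha> \<cdot>\<^sub>m Lhat L D w)" "j < dim_col (\<alpha> \<cdot>\<^sub>m Lhat L D w)"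
  then have ij: "i < m" "j < m" using Lhat_carrier[of L D w] by auto
  have "(transpose_mat X * X) $$ (i, j)
      = (\<Sum>c<m + t. (sqrt \<alpha> * sqrt \<alpha>) * (sqrt (w i) * sqrt (w j)) * (Z $$ (c, i) * Z $$ (c, j)))"
    using ij by (subst index_transpose_mult_mat_sum[OF X_carrier ij])
      (auto simp: X_def algebra_simps simp del: real_sqrt_mult_self)
  also have "\<dots> = \<alpha> * (sqrt (w i) * L $$ (D ! i, D ! j) * sqrt (w j))"
    unfolding sum_distrib_left[symmetric] using gram_entry[of i j] ij \<alpha>_pos by (simp add: nth_append)
  finally show "(transpose_mat X * X) $$ (i, j) = (\<alpha> \<cdot>\<^sub>m Lhat L D w) $$ (i, j)"
    using ij Lhat_carrier[of L D w] by (simp add: index_Lhat)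
qed (use X_carrier Lhat_carrier[of L D w] in auto)

lemma transpose_V_mult_V: "transpose_mat V * V = \<alpha> \<cdot>\<^sub>m Ltilde L D w \<alpha> r \<sigma>"
proof (rule eq_matI)
  fix a b assume "a < dim_row (\<alpha> \<cdot>\<^sub>m Ltilde L D w \<alpha> r \<sigma>)" "b < dim_col (\<alpha> \<cdot>\<^sub>m Ltilde L D w \<alpha> r \<sigma>)"
  then have ab: "a < t" "b < t" by (auto simp: Ltilde_def)
  have "(transpose_mat V * V) $$ (a, b) = (\<Sum>c<m + t. (sqrt (\<alpha> / r) * sqrt (\<alpha> / r))
      / (sqrt (marg a) * sqrt (marg b)) * (Z $$ (c, m + a) * Z $$ (c, m + b)))"
    using ab by (subst index_transpose_mult_mat_sum[OF V_carrier ab])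
      (auto simp: V_def algebra_simps simp del: real_sqrt_mult_self)
  also have "\<dots> = (\<alpha> / r) / (sqrt (marg a) * sqrt (marg b)) * L $$ (\<sigma> ! a, \<sigma> ! b)"
    unfolding sum_distrib_left[symmetric] using gram_entry[of "m + a" "m + b"] ab \<alpha>_pos r_pos
    by (simp add: nth_append)
  finally show "(transpose_mat V * V) $$ (a, b) = (\<alpha> \<cdot>\<^sub>m Ltilde L D w \<alpha> r \<sigma>) $$ (a, b)"
    using ab marg_pos by (simp add: Ltilde_def marg_def real_sqrt_mult)
qed (use V_carrier in \<open>auto simp: Ltilde_def\<close>)

lemma G_carrier: "G \<in> carrier_mat m m"
  and one_plus_XtX_mult_G: "(1\<^sub>m m + transpose_mat X * X) * G = 1\<^sub>m m"
proof -
  have "1\<^sub>m m + transpose_mat X * X \<in> carrier_mat m m" using X_carrier by auto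
  note inv = minv_inverse[OF this det_one_plus_transpose_mult_pos[OF X_carrier, THEN less_imp_neq, symmetric]]
  show "G \<in> carrier_mat m m" "(1\<^sub>m m + transpose_mat X * X) * G = 1\<^sub>m m"
    using inv unfolding G_def by auto
qed

lemma d_eff_eq: "d_eff (\<alpha> \<cdot>\<^sub>m Lhat L D w) = mtrace (transpose_mat X * X * G)"
  using Lhat_carrier[of L D w]
  by (simp add: d_eff_def G_def transpose_X_mult_X comm_add_mat[of _ m m])


lemma G_entry:
  assumes "i < m" "j < m"
  shows "(\<Sum>c<m. ((if i = c then 1 else 0) + \<alpha> * (sqrt (w i) * L $$ (D ! i, D ! c) * sqrt (w c)))
      * G $$ (c, j)) = (if i = j then 1 else 0)"
proof -
  have "((1\<^sub>m m + transpose_mat X * X) * G) $$ (i, j)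
      = (\<Sum>c<m. (1\<^sub>m m + transpose_mat X * X) $$ (i, c) * G $$ (c, j))"
    by (rule index_mult_mat_sum[OF _ G_carrier assms]) (use X_carrier in auto)
  also have "\<dots> = (\<Sum>c<m. ((if i = c then 1 else 0) + \<alpha> * (sqrt (w i) * L $$ (D ! i, D ! c) * sqrt (w c)))
      * G $$ (c, j))"
    using assms Lhat_carrier[of L D w] by (intro sum.cong refl) (auto simp: transpose_X_mult_X index_Lhat)
  finally show ?thesis using one_plus_XtX_mult_G assms by simp
qed

lemma minv_regularized_dictionary:
  "minv (\<alpha> \<cdot>\<^sub>m subm L D D + diagw m (\<lambda>j. 1 / w j))
     = mat m m (\<lambda>(p, q). sqrt (w p) * G $$ (p, q) * sqrt (w q))"
    (is "minv ?A = ?N")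
proof (rule minv_eqI)
  show A: "?A \<in> carrier_mat m m" and N: "?N \<in> carrier_mat m m" by auto
  show "?A * ?N = 1\<^sub>m m"
  proof (rule eq_matI)
    fix i j assume "i < dim_row (1\<^sub>m m :: real mat)" "j < dim_col (1\<^sub>m m :: real mat)"
    then have ij: "i < m" "j < m" by auto
    have si: "0 < sqrt (w i)" using w_pos ij by simp
    have "(?A * ?N) $$ (i, j) = (\<Sum>c<m. (sqrt (w j) / sqrt (w i)) * (((if i = c then 1 else 0)
        + \<alpha> * (sqrt (w i) * L $$ (D ! i, D ! c) * sqrt (w c))) * G $$ (c, j)))"
      unfolding index_mult_mat_sum[OF A N ij]
    proof (intro sum.cong refl)
      fix c assume "c \<in> {..<m}"
      then have c: "c < m" by simp
      have Aic: "?A $$ (i, c)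
          = \<alpha> * L $$ (D ! i, D ! c) + (if i = c then 1 / (sqrt (w i) * sqrt (w i)) else 0)"
        using ij c sqrt_w_square[OF c] by (auto simp del: real_sqrt_mult_self)
      have Ncj: "?N $$ (c, j) = sqrt (w c) * G $$ (c, j) * sqrt (w j)" using ij c by simp
      show "?A $$ (i, c) * ?N $$ (c, j) = (sqrt (w j) / sqrt (w i)) * (((if i = c then 1 else 0)
          + \<alpha> * (sqrt (w i) * L $$ (D ! i, D ! c) * sqrt (w c))) * G $$ (c, j))"
        unfolding Aic Ncj using si by (cases "i = c") (simp_all add: field_simps del: real_sqrt_mult_self)
    qed
    also have "\<dots> = (1\<^sub>m m :: real mat) $$ (i, j)"
      using ij si by (simp only: sum_distrib_left[symmetric] G_entry[OF ij]) auto
    finally show "(?A * ?N) $$ (i, j) = (1\<^sub>m m :: real mat) $$ (i, j)" .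
  qed (use A N in auto)
qed

definition dictionary_quad :: "nat \<Rightarrow> real" where
  "dictionary_quad a = (\<Sum>q<m. (\<Sum>p<m. L $$ (\<sigma> ! a, D ! p) * (sqrt (w p) * G $$ (p, q) * sqrt (w q)))
      * L $$ (D ! q, \<sigma> ! a))"

lemma marg_eq: "marg a = \<alpha> * (L $$ (\<sigma> ! a, \<sigma> ! a) - \<alpha> * dictionary_quad a)"
proof -
  have "(subm L [\<sigma> ! a] D * mat m m (\<lambda>(p, q). sqrt (w p) * G $$ (p, q) * sqrt (w q)) * subm L D [\<sigma> ! a])
      $$ (0, 0) = dictionary_quad a"
    unfolding dictionary_quad_def by (subst index_mult_mat3_sum[of _ 1 m _ m _ 1]) auto
  then show ?thesis
    unfolding marg_def approx_marg_def minv_regularized_dictionary by simp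
qed

lemma diag_VtX_G_XtV:
  assumes a: "a < t"
  shows "((transpose_mat V * X) * G * (transpose_mat X * V)) $$ (a, a)
    = (\<alpha> / r) / marg a * \<alpha> * dictionary_quad a"
proof -
  have sq: "sqrt (\<alpha> / r) * sqrt (\<alpha> / r) = \<alpha> / r" "sqrt \<alpha> * sqrt \<alpha> = \<alpha>"
    using \<alpha>_pos r_pos by auto
  have VtX: "(transpose_mat V * X) $$ (a, p)
      = sqrt (\<alpha> / r) / sqrt (marg a) * (sqrt \<alpha> * sqrt (w p)) * L $$ (\<sigma> ! a, D ! p)" if p: "p < m" for p
  proof -
    have "(transpose_mat V * X) $$ (a, p) = (\<Sum>c<m + t. sqrt (\<alpha> / r) / sqrt (marg a) * (sqrt \<alpha> * sqrt (w p))
        * (Z $$ (c, m + a) * Z $$ (c, p)))"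
      using V_carrier X_carrier a p
      by (subst index_mult_mat_sum[of _ t "m + t" _ m]) (auto simp: V_def X_def algebra_simps)
    then show ?thesis
      unfolding sum_distrib_left[symmetric] using gram_entry[of "m + a" p] a p by (simp add: nth_append)
  qed
  have XtV: "(transpose_mat X * V) $$ (q, a)
      = (sqrt \<alpha> * sqrt (w q)) * (sqrt (\<alpha> / r) / sqrt (marg a)) * L $$ (D ! q, \<sigma> ! a)" if q: "q < m" for q
  proof -
    have "(transpose_mat X * V) $$ (q, a) = (\<Sum>c<m + t. (sqrt \<alpha> * sqrt (w q)) * (sqrt (\<alpha> / r) / sqrt (marg a))
        * (Z $$ (c, q) * Z $$ (c, m + a)))"
      using V_carrier X_carrier a q
      by (subst index_mult_mat_sum[of _ m "m + t" _ t]) (auto simp: V_def X_def algebra_simps)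
    then show ?thesis
      unfolding sum_distrib_left[symmetric] using gram_entry[of q "m + a"] a q by (simp add: nth_append)
  qed
  have "((transpose_mat V * X) * G * (transpose_mat X * V)) $$ (a, a)
      = (\<Sum>q<m. (\<Sum>p<m. (transpose_mat V * X) $$ (a, p) * G $$ (p, q)) * (transpose_mat X * V) $$ (q, a))"
    by (rule index_mult_mat3_sum[of _ t m _ m _ t]) (use V_carrier X_carrier G_carrier a in auto)
  also have "\<dots> = (\<Sum>q<m. (\<Sum>p<m. (sqrt (\<alpha> / r) * sqrt (\<alpha> / r)) / (sqrt (marg a) * sqrt (marg a))
      * (sqrt \<alpha> * sqrt \<alpha>) * (L $$ (\<sigma> ! a, D ! p) * (sqrt (w p) * G $$ (p, q) * sqrt (w q))
      * L $$ (D ! q, \<sigma> ! a))))"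
    unfolding sum_distrib_right
    by (intro sum.cong refl) (auto simp: VtX XtV field_simps simp del: real_sqrt_mult_self)
  also have "\<dots> = (\<alpha> / r) / marg a * \<alpha> * dictionary_quad a"
    unfolding dictionary_quad_def sum_distrib_left sum_distrib_right sq sqrt_marg_square[OF a]
    by (simp add: mult_ac)
  finally show ?thesis .
qed

lemma mtrace_residual: "mtrace (transpose_mat V * (1\<^sub>m (m + t) - X * G * transpose_mat X) * V) = real t / r"
proof -
  let ?Q = "(transpose_mat V * X) * G * (transpose_mat X * V)"
  have "(transpose_mat V * V - ?Q) $$ (a, a) = 1 / r" if a: "a < t" for a
  proof -
    have pos: "0 < marg a" using marg_pos a unfolding marg_def by simp
    have "(transpose_mat V * V - ?Q) $$ (a, a) = (transpose_mat V * V) $$ (a, a) - ?Q $$ (a, a)"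
      using a V_carrier X_carrier G_carrier by simp
    also have "\<dots> = \<alpha> * (L $$ (\<sigma> ! a, \<sigma> ! a) / (r * marg a)) - (\<alpha> / r) / marg a * \<alpha> * dictionary_quad a"
      using a pos unfolding transpose_V_mult_V diag_VtX_G_XtV[OF a] by (simp add: Ltilde_def marg_def)
    also have "\<dots> = (\<alpha> / r) / marg a * (L $$ (\<sigma> ! a, \<sigma> ! a) - \<alpha> * dictionary_quad a)"
      using pos r_pos by (simp add: field_simps)
    also have "\<dots> = (\<alpha> * (L $$ (\<sigma> ! a, \<sigma> ! a) - \<alpha> * dictionary_quad a)) / (r * marg a)"
      by simp
    also have "\<dots> = 1 / r"
      unfolding marg_eq[of a, symmetric] using pos by simp
    finally show ?thesis .
  qed
  moreover have "dim_row (transpose_mat V * V - ?Q) = t" using V_carrier by simp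
  ultimately show ?thesis
    unfolding sandwich_one_minus[OF V_carrier X_carrier G_carrier] mtrace_def by simp
qed

end

theorem mainTheorem6:
  fixes L :: "real mat" and n :: nat and D :: "nat list" and w :: "nat \<Rightarrow> real"
    and r \<alpha> :: real and \<sigma> :: "nat list"
  assumes "psd_mat n L"
    and "set D \<subseteq> {..<n}"
    and "\<forall>j < length D. w j > 0"
    and "r \<ge> 1" and "\<alpha> > 0"
    and "set \<sigma> \<subseteq> {..<n}"
    and "\<forall>j < length \<sigma>. approx_marg L D w \<alpha> (\<sigma> ! j) > 0"
  shows "exp (d_eff (\<alpha> \<cdot>\<^sub>m Lhat L D w)) * det (1\<^sub>m (length \<sigma>) + \<alpha> \<cdot>\<^sub>m Ltilde L D w \<alpha> r \<sigma>)
         / (exp (real (length \<sigma>) / r) * det (1\<^sub>m (length D) + \<alpha> \<cdot>\<^sub>m Lhat L D w)) \<le> 1"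
proof -
  have "psd_mat (length (D @ \<sigma>)) (subm L (D @ \<sigma>) (D @ \<sigma>))"
    using psd_mat_subm[OF assms(1), of "D @ \<sigma>"] assms(2,6) by simp
  then obtain Z where Z: "Z \<in> carrier_mat (length D + length \<sigma>) (length D + length \<sigma>)"
    and gram: "subm L (D @ \<sigma>) (D @ \<sigma>) = transpose_mat Z * Z"
    using cholesky_decomposition by (metis length_append)
  \<comment> \<open>the hypothesis \<open>r \<ge> 1\<close> is only used as \<open>r > 0\<close>\<close>
  interpret factored_dictionary L D \<sigma> w \<alpha> r Z
    by unfold_locales (use Z gram assms in auto)
  have "det (1\<^sub>m t + \<alpha> \<cdot>\<^sub>m Ltilde L D w \<alpha> r \<sigma>)
      \<le> det (1\<^sub>m m + \<alpha> \<cdot>\<^sub>m Lhat L D w) * exp (real t / r - d_eff (\<alpha> \<cdot>\<^sub>m Lhat L D w))"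
    using det_one_plus_gram_le[OF X_carrier V_carrier, folded G_def]
    unfolding mtrace_residual d_eff_eq transpose_X_mult_X transpose_V_mult_V .
  moreover have "0 < det (1\<^sub>m m + \<alpha> \<cdot>\<^sub>m Lhat L D w)"
    using det_one_plus_transpose_mult_pos[OF X_carrier] unfolding transpose_X_mult_X .
  ultimately show ?thesis by (simp add: exp_diff pos_divide_le_eq pos_le_divide_eq mult.commute)
qed

end
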